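(* Let $W:\mathcal X\to\mathcal Y$ be a DMC with $|\mathcal Y|>2|\mathcal X|$ and fix any input distribution. Then there exist two distinct output letters $\alpha,\beta\in\mathcal Y$ whose merger yields a channel $Q$ with $$I(W)-I(Q)\le \mu(|\mathcal X|)\,|\mathcal Y|^{-\frac{|\mathcal X|+1}{|\mathcal X|-1}},$$ where $\mu(n)=\frac{2}{n-1}\nu(n)$.
   Context: $\mathcal X,\mathcal Y$ are finite disjoint sets with $|\mathcal X|\ge 2$; $W:\mathcal X\to\mathcal Y$ is a discrete memoryless channel with transition probabilities $W(y|x)$. An input distribution $\pi(x)>0$ is fixed and output probabilities $\pi(y)=\sum_x\pi(x)W(y|x)$ are assumed positive. $I(\cdot)$ denotes input–output mutual information (natural log) under this input distribution. Merging two distinct output letters $\alpha,\beta$ produces the channel $Q$ with output alphabet $(\mathcal Y\setminus\{\alpha,\beta\})\cup\{\gamma\}$, $Q(\gamma|x)=W(\alpha|x)+W(\beta|x)$ and $Q(y|x)=W(y|x)$ otherwise. The constant is $$\nu(n)=\frac{\pi n(n-1)}{2\left(\sqrt{1+\frac{1}{2(n-1)}}-1\right)^2}\left(\frac{2n}{\Gamma\!\left(1+\frac{n-1}{2}\right)}\right)^{\frac{2}{n-1}},$$ with $\pi=3.14159\ldots$ and $\Gamma$ the Gamma function. *)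

theory Defs
  imports "HOL-Analysis.Analysis"
begin

text \<open>A DMC from input alphabet X to output alphabet Y is a function W x y = W(y|x).\<close>
definition is_channel :: "'a set \<Rightarrow> 'b set \<Rightarrow> ('a \<Rightarrow> 'b \<Rightarrow> real) \<Rightarrow> bool" where
  "is_channel X Y W \<longleftrightarrow> (\<forall>x\<in>X. (\<forall>y\<in>Y. W x y \<ge> 0) \<and> (\<Sum>y\<in>Y. W x y) = 1)"

definition out_prob :: "'a set \<Rightarrow> ('a \<Rightarrow> real) \<Rightarrow> ('a \<Rightarrow> 'b \<Rightarrow> real) \<Rightarrow> 'b \<Rightarrow> real" where
  "out_prob X p W y = (\<Sum>x\<in>X. p x * W x y)"

definition mutual_info :: "'a set \<Rightarrow> 'b set \<Rightarrow> ('a \<Rightarrow> real) \<Rightarrow> ('a \<Rightarrow> 'b \<Rightarrow> real) \<Rightarrow> real" where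
  "mutual_info X Y p W =
     (\<Sum>x\<in>X. \<Sum>y\<in>Y. if p x * W x y = 0 then 0
        else p x * W x y * ln (W x y / out_prob X p W y))"

text \<open>Merging letters alpha, beta: new output alphabet is (Y - {alpha,beta}) with Some-tags,
  plus the fresh letter gamma = None.\<close>
definition merged_alphabet :: "'b set \<Rightarrow> 'b \<Rightarrow> 'b \<Rightarrow> 'b option set" where
  "merged_alphabet Y \<alpha> \<beta> = Some ` (Y - {\<alpha>, \<beta>}) \<union> {None}"

definition merge_channel :: "('a \<Rightarrow> 'b \<Rightarrow> real) \<Rightarrow> 'b \<Rightarrow> 'b \<Rightarrow> 'a \<Rightarrow> 'b option \<Rightarrow> real" where
  "merge_channel W \<alpha> \<beta> x z = (case z of None \<Rightarrow> W x \<alpha> + W x \<beta> | Some y \<Rightarrow> W x y)"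

definition nu_const :: "nat \<Rightarrow> real" where
  "nu_const n = pi * real n * (real n - 1) /
      (2 * (sqrt (1 + 1 / (2 * (real n - 1))) - 1)^2)
      * (2 * real n / Gamma (1 + (real n - 1) / 2)) powr (2 / (real n - 1))"

definition mu_const :: "nat \<Rightarrow> real" where
  "mu_const n = 2 / (real n - 1) * nu_const n"

end

theory Submission
  imports Defs
begin

text \<open>
  Write \<open>u\<^sub>y\<close> for the vector \<open>(\<surd>P(x|y))\<^sub>x\<close> of square roots of posterior probabilities; it is a
  nonnegative unit vector in \<open>\<real>\<^sup>n\<close>, \<open>n = |\<X>|\<close>. Bounding \<open>ln t \<le> t - 1\<close> term by term shows that merging
  \<open>\<alpha>\<close> and \<open>\<beta>\<close> loses at most \<open>2 (\<pi>(\<alpha>) + \<pi>(\<beta>)) \<parallel>u\<^sub>\<alpha> - u\<^sub>\<beta>\<parallel>\<^sup>2\<close>. More than half of the \<open>m = |\<Y>|\<close>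
  letters are light, \<open>\<pi>(y) \<le> 2/m\<close>. Labelling a unit vector by a largest coordinate and by the
  cells of width \<open>1/N\<close> of its other coordinates gives \<open>n N\<^sup>n\<^sup>-\<^sup>1\<close> labels, so for the largest \<open>N\<close>
  with fewer labels than light letters two of them collide, and then \<open>\<parallel>u\<^sub>\<alpha> - u\<^sub>\<beta>\<parallel>\<^sup>2 \<le> n(n-1)/N\<^sup>2\<close>.
  The resulting bound \<open>8n(n-1)/(m N\<^sup>2)\<close>, with \<open>m < 2n(N+1)\<^sup>n\<^sup>-\<^sup>1\<close>, is at most
  \<open>\<mu>(n) m\<^sup>-\<^sup>(\<^sup>n\<^sup>+\<^sup>1\<^sup>)\<^sup>/\<^sup>(\<^sup>n\<^sup>-\<^sup>1\<^sup>)\<close> because \<open>\<mu>(n) \<ge> 32 n(n-1) (2n)\<^sup>2\<^sup>/\<^sup>(\<^sup>n\<^sup>-\<^sup>1\<^sup>)\<close>, using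
  \<open>\<Gamma>(1 + k/2) \<le> ((k+2)/2)\<^sup>k\<^sup>/\<^sup>2\<close> and \<open>\<pi> > 3\<close>.
\<close>

section \<open>The information lost by merging two output letters\<close>

lemma mutual_info_eq_sum:
  "mutual_info X Y p W = (\<Sum>x\<in>X. \<Sum>y\<in>Y. p x * W x y * ln (W x y / out_prob X p W y))"
  unfolding mutual_info_def by (intro sum.cong refl) simp

lemma out_prob_merge_channel_Some [simp]:
  "out_prob X p (merge_channel W \<alpha> \<beta>) (Some y) = out_prob X p W y"
  by (simp add: out_prob_def merge_channel_def)

lemma out_prob_merge_channel_None [simp]:
  "out_prob X p (merge_channel W \<alpha> \<beta>) None = out_prob X p W \<alpha> + out_prob X p W \<beta>"
  by (simp add: out_prob_def merge_channel_def sum.distrib distrib_left)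

lemma mutual_info_merge_loss:
  assumes "finite Y" "\<alpha> \<in> Y" "\<beta> \<in> Y" "\<alpha> \<noteq> \<beta>"
  shows "mutual_info X Y p W - mutual_info X (merged_alphabet Y \<alpha> \<beta>) p (merge_channel W \<alpha> \<beta>)
    = (\<Sum>x\<in>X. p x * (W x \<alpha> * ln (W x \<alpha> / out_prob X p W \<alpha>)
                    + W x \<beta> * ln (W x \<beta> / out_prob X p W \<beta>)
                    - (W x \<alpha> + W x \<beta>) * ln ((W x \<alpha> + W x \<beta>) / (out_prob X p W \<alpha> + out_prob X p W \<beta>))))"
proof -
  let ?o = "out_prob X p W"
  let ?R = "Y - {\<alpha>, \<beta>}"
  define f where "f x y = p x * W x y * ln (W x y / ?o y)" for x y
  have Y: "Y = insert \<alpha> (insert \<beta> ?R)" using assms by auto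
  have split: "(\<Sum>y\<in>Y. f x y) = (\<Sum>y\<in>?R. f x y) + f x \<alpha> + f x \<beta>" for x
    using assms by (subst Y) simp
  have merged_split: "(\<Sum>z\<in>merged_alphabet Y \<alpha> \<beta>. p x * merge_channel W \<alpha> \<beta> x z *
        ln (merge_channel W \<alpha> \<beta> x z / out_prob X p (merge_channel W \<alpha> \<beta>) z))
      = (\<Sum>y\<in>?R. f x y) + p x * (W x \<alpha> + W x \<beta>) * ln ((W x \<alpha> + W x \<beta>) / (?o \<alpha> + ?o \<beta>))" for x
    unfolding merged_alphabet_def using assms(1)
    by (subst sum.union_disjoint) (auto simp: sum.reindex f_def merge_channel_def)
  show ?thesis
    unfolding mutual_info_eq_sum f_def[symmetric] split merged_split sum_subtractf[symmetric]
    by (intro sum.cong refl) (simp add: f_def algebra_simps)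
qed

lemma mult_ln_diff_le:
  fixes a c d :: real
  assumes "0 \<le> a" "0 < c" "0 < d"
  shows "a * (ln (a / c) - ln d) \<le> a * (a / (c * d) - 1)"
proof (cases "a = 0")
  case False
  then have "ln (a / c) - ln d = ln (a / (c * d))"
    using assms by (simp add: ln_div ln_mult)
  also have "\<dots> \<le> a / (c * d) - 1"
    using assms False by (intro ln_le_minus_one) simp
  finally show ?thesis using assms by (intro mult_left_mono) auto
qed simp

text \<open>Both sides vanish when \<open>a + b = 0\<close>, thanks to \<open>x / 0 = 0\<close>.\<close>

lemma merge_divergence_le_chi_square:
  fixes a b P Q :: real
  assumes "0 \<le> a" "0 \<le> b" "0 < P" "0 < Q"
  shows "a * ln (a / P) + b * ln (b / Q) - (a + b) * ln ((a + b) / (P + Q))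
    \<le> (a * Q - b * P)\<^sup>2 / (P * Q * (a + b))"
proof (cases "a + b = 0")
  case False
  define d where "d = (a + b) / (P + Q)"
  have d: "0 < d" using assms False unfolding d_def by simp
  have "a * ln (a / P) + b * ln (b / Q) - (a + b) * ln d
      = a * (ln (a / P) - ln d) + b * (ln (b / Q) - ln d)" by (simp add: algebra_simps)
  also have "\<dots> \<le> a * (a / (P * d) - 1) + b * (b / (Q * d) - 1)"
    using assms d by (intro add_mono mult_ln_diff_le) auto
  also have "\<dots> = (a * Q - b * P)\<^sup>2 / (P * Q * (a + b))"
    using assms False unfolding d_def
    by (simp add: field_simps add_nonneg_eq_0_iff) (simp add: power2_eq_square algebra_simps)
  finally show ?thesis unfolding d_def .
next
  case True
  then have "a = 0" "b = 0" using assms by auto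
  then show ?thesis by simp
qed

lemma chi_square_le_hellinger:
  fixes a b P Q :: real
  assumes "0 \<le> a" "0 \<le> b" "0 < P" "0 < Q"
  shows "(a * Q - b * P)\<^sup>2 / (P * Q * (a + b)) \<le> 2 * (P + Q) * (sqrt (a / P) - sqrt (b / Q))\<^sup>2"
proof -
  define s where "s = sqrt (a / P)"
  define t where "t = sqrt (b / Q)"
  have a: "a = P * s\<^sup>2" and b: "b = Q * t\<^sup>2" unfolding s_def t_def using assms by auto
  have "P * Q * (s + t)\<^sup>2 \<le> 2 * (P + Q) * (a + b)"
  proof -
    have "2 * (P + Q) * (a + b) - P * Q * (s + t)\<^sup>2 = 2 * P\<^sup>2 * s\<^sup>2 + 2 * Q\<^sup>2 * t\<^sup>2 + P * Q * (s - t)\<^sup>2"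
      unfolding a b by (simp add: power2_eq_square algebra_simps)
    moreover have "0 \<le> 2 * P\<^sup>2 * s\<^sup>2 + 2 * Q\<^sup>2 * t\<^sup>2 + P * Q * (s - t)\<^sup>2" using assms by simp
    ultimately show ?thesis by linarith
  qed
  then have "P * Q * ((P * Q * (s + t)\<^sup>2) * (s - t)\<^sup>2) \<le> P * Q * ((2 * (P + Q) * (a + b)) * (s - t)\<^sup>2)"
    using assms by (intro mult_left_mono mult_right_mono) auto
  moreover have "(a * Q - b * P)\<^sup>2 = P * Q * ((P * Q * (s + t)\<^sup>2) * (s - t)\<^sup>2)"
    unfolding a b by (simp add: power2_eq_square algebra_simps)
  ultimately have "(a * Q - b * P)\<^sup>2 \<le> P * Q * ((2 * (P + Q) * (a + b)) * (s - t)\<^sup>2)" by simp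
  also have "\<dots> = (2 * (P + Q) * (s - t)\<^sup>2) * (P * Q * (a + b))" by (simp add: algebra_simps)
  finally have "(a * Q - b * P)\<^sup>2 \<le> (2 * (P + Q) * (s - t)\<^sup>2) * (P * Q * (a + b))" .
  then show ?thesis
    unfolding s_def[symmetric] t_def[symmetric] using assms
    by (cases "a + b = 0") (auto simp: divide_le_eq)
qed

definition sqrt_posterior :: "'a set \<Rightarrow> ('a \<Rightarrow> real) \<Rightarrow> ('a \<Rightarrow> 'b \<Rightarrow> real) \<Rightarrow> 'b \<Rightarrow> 'a \<Rightarrow> real" where
  "sqrt_posterior X p W y x = sqrt (p x * W x y / out_prob X p W y)"

lemma sum_out_prob:
  assumes "is_channel X Y W" "(\<Sum>x\<in>X. p x) = 1"
  shows "(\<Sum>y\<in>Y. out_prob X p W y) = 1"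
proof -
  have "(\<Sum>y\<in>Y. out_prob X p W y) = (\<Sum>x\<in>X. p x * (\<Sum>y\<in>Y. W x y))"
    unfolding out_prob_def by (subst sum.swap) (simp add: sum_distrib_left)
  also have "\<dots> = 1" using assms by (simp add: is_channel_def)
  finally show ?thesis .
qed

lemma sqrt_posterior_sq:
  assumes "is_channel X Y W" "\<forall>x\<in>X. 0 < p x" "y \<in> Y" "x \<in> X" "0 < out_prob X p W y"
  shows "(sqrt_posterior X p W y x)\<^sup>2 = p x * W x y / out_prob X p W y"
    and "0 \<le> sqrt_posterior X p W y x"
proof -
  have "0 \<le> p x * W x y / out_prob X p W y"
    using assms unfolding is_channel_def by (auto intro!: divide_nonneg_pos mult_nonneg_nonneg simp: less_imp_le)
  then show "(sqrt_posterior X p W y x)\<^sup>2 = p x * W x y / out_prob X p W y"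
    and "0 \<le> sqrt_posterior X p W y x"
    unfolding sqrt_posterior_def by simp_all
qed

lemma sum_sqrt_posterior_sq:
  assumes "is_channel X Y W" "\<forall>x\<in>X. 0 < p x" "y \<in> Y" "0 < out_prob X p W y"
  shows "(\<Sum>x\<in>X. (sqrt_posterior X p W y x)\<^sup>2) = 1"
proof -
  have "(\<Sum>x\<in>X. (sqrt_posterior X p W y x)\<^sup>2) = (\<Sum>x\<in>X. p x * W x y) / out_prob X p W y"
    using sqrt_posterior_sq(1)[OF assms(1-3) _ assms(4)] by (simp add: sum_divide_distrib)
  then show ?thesis using assms by (simp add: out_prob_def)
qed

lemma mutual_info_merge_loss_le:
  assumes "finite Y" "is_channel X Y W" "\<forall>x\<in>X. 0 < p x" "\<forall>y\<in>Y. 0 < out_prob X p W y"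
    and "\<alpha> \<in> Y" "\<beta> \<in> Y" "\<alpha> \<noteq> \<beta>"
  shows "mutual_info X Y p W - mutual_info X (merged_alphabet Y \<alpha> \<beta>) p (merge_channel W \<alpha> \<beta>)
    \<le> 2 * (out_prob X p W \<alpha> + out_prob X p W \<beta>) *
       (\<Sum>x\<in>X. (sqrt_posterior X p W \<alpha> x - sqrt_posterior X p W \<beta> x)\<^sup>2)"
proof -
  let ?o = "out_prob X p W"
  have "p x * (W x \<alpha> * ln (W x \<alpha> / ?o \<alpha>) + W x \<beta> * ln (W x \<beta> / ?o \<beta>)
          - (W x \<alpha> + W x \<beta>) * ln ((W x \<alpha> + W x \<beta>) / (?o \<alpha> + ?o \<beta>)))
      \<le> 2 * (?o \<alpha> + ?o \<beta>) * (sqrt_posterior X p W \<alpha> x - sqrt_posterior X p W \<beta> x)\<^sup>2"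
    if x: "x \<in> X" for x
  proof -
    have W: "0 \<le> W x \<alpha>" "0 \<le> W x \<beta>" using assms x unfolding is_channel_def by auto
    have p: "0 < p x" and o: "0 < ?o \<alpha>" "0 < ?o \<beta>" using assms x by auto
    have "sqrt_posterior X p W \<alpha> x - sqrt_posterior X p W \<beta> x
        = sqrt (p x) * (sqrt (W x \<alpha> / ?o \<alpha>) - sqrt (W x \<beta> / ?o \<beta>))"
      unfolding sqrt_posterior_def by (simp add: right_diff_distrib real_sqrt_mult[symmetric])
    then have "(sqrt_posterior X p W \<alpha> x - sqrt_posterior X p W \<beta> x)\<^sup>2
        = p x * (sqrt (W x \<alpha> / ?o \<alpha>) - sqrt (W x \<beta> / ?o \<beta>))\<^sup>2"
      using p by (simp add: power_mult_distrib)
    moreover have "W x \<alpha> * ln (W x \<alpha> / ?o \<alpha>) + W x \<beta> * ln (W x \<beta> / ?o \<beta>)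
          - (W x \<alpha> + W x \<beta>) * ln ((W x \<alpha> + W x \<beta>) / (?o \<alpha> + ?o \<beta>))
        \<le> 2 * (?o \<alpha> + ?o \<beta>) * (sqrt (W x \<alpha> / ?o \<alpha>) - sqrt (W x \<beta> / ?o \<beta>))\<^sup>2"
      using merge_divergence_le_chi_square[OF W o] chi_square_le_hellinger[OF W o] by linarith
    ultimately show ?thesis using p by (simp add: mult_left_mono mult.left_commute)
  qed
  then show ?thesis
    unfolding mutual_info_merge_loss[OF assms(1,5-7)] sum_distrib_left by (rule sum_mono)
qed

section \<open>Pigeonhole on the nonnegative part of the unit sphere\<close>

definition grid_cell :: "nat \<Rightarrow> real \<Rightarrow> nat" where
  "grid_cell N a = min (nat \<lfloor>real N * a\<rfloor>) (N - 1)"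

lemma grid_cell_less: "0 < N \<Longrightarrow> grid_cell N a < N"
  unfolding grid_cell_def by simp

lemma abs_diff_le_of_grid_cell_eq:
  fixes a b :: real
  assumes "0 \<le> a" "a \<le> 1" "0 \<le> b" "b \<le> 1" "1 \<le> N" and "grid_cell N a = grid_cell N b"
  shows "\<bar>a - b\<bar> \<le> 1 / real N"
proof -
  have floor_nonneg: "0 \<le> \<lfloor>real N * a\<rfloor>" "0 \<le> \<lfloor>real N * b\<rfloor>" using assms by auto
  have "\<bar>real N * a - real N * b\<bar> \<le> 1"
  proof (cases "nat \<lfloor>real N * a\<rfloor> < N - 1 \<or> nat \<lfloor>real N * b\<rfloor> < N - 1")
    case True
    then have "nat \<lfloor>real N * a\<rfloor> = nat \<lfloor>real N * b\<rfloor>"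
      using assms by (auto simp: grid_cell_def min_def split: if_splits)
    then have "\<lfloor>real N * a\<rfloor> = \<lfloor>real N * b\<rfloor>" using floor_nonneg by (metis nat_0_le)
    then show ?thesis by linarith
  next
    case False
    then have "int (N - 1) \<le> \<lfloor>real N * a\<rfloor>" "int (N - 1) \<le> \<lfloor>real N * b\<rfloor>"
      using floor_nonneg by (simp_all add: not_less le_nat_iff)
    then have "real N - 1 \<le> real N * a" "real N - 1 \<le> real N * b"
      using assms(5) by (simp_all add: le_floor_iff)
    moreover have "real N * a \<le> real N" "real N * b \<le> real N"
      using assms by (simp_all add: mult_left_le)
    ultimately show ?thesis by linarith
  qed
  then have "real N * \<bar>a - b\<bar> \<le> 1" by (simp add: abs_mult flip: right_diff_distrib)
  then show ?thesis using assms by (simp add: field_simps)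
qed

lemma abs_diff_squares: "0 \<le> a \<Longrightarrow> 0 \<le> b \<Longrightarrow> \<bar>a\<^sup>2 - b\<^sup>2\<bar> = \<bar>a - b\<bar> * (a + b :: real)"
  by (simp add: power2_eq_square square_diff_square_factored abs_mult)

text \<open>For two nonnegative unit vectors with a common largest coordinate \<open>j\<close>, the identity
  \<open>u\<^sub>j\<^sup>2 - v\<^sub>j\<^sup>2 = \<Sum>\<^sub>i\<^sub>\<noteq>\<^sub>j (v\<^sub>i\<^sup>2 - u\<^sub>i\<^sup>2)\<close> controls the difference at \<open>j\<close> by the others.\<close>

lemma abs_diff_at_common_argmax_le:
  fixes u v :: "'a \<Rightarrow> real"
  assumes "finite X" "j \<in> X" "\<forall>x\<in>X. 0 \<le> u x \<and> 0 \<le> v x"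
    and "(\<Sum>x\<in>X. (u x)\<^sup>2) = 1" "(\<Sum>x\<in>X. (v x)\<^sup>2) = 1"
    and max: "\<forall>i\<in>X. u i \<le> u j \<and> v i \<le> v j"
  shows "\<bar>u j - v j\<bar> \<le> (\<Sum>i\<in>X - {j}. \<bar>u i - v i\<bar>)"
proof -
  let ?R = "X - {j}"
  have uj: "0 < u j"
  proof (rule ccontr)
    assume "\<not> 0 < u j"
    then have "\<forall>x\<in>X. u x = 0" using assms by force
    then show False using assms by simp
  qed
  have vj: "0 \<le> v j" using assms by auto
  have "(u j)\<^sup>2 - (v j)\<^sup>2 = (\<Sum>i\<in>?R. (v i)\<^sup>2 - (u i)\<^sup>2)"
    using assms by (simp add: sum.remove sum_subtractf)
  then have "\<bar>u j - v j\<bar> * (u j + v j) = \<bar>\<Sum>i\<in>?R. (v i)\<^sup>2 - (u i)\<^sup>2\<bar>"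
    using uj vj by (metis abs_diff_squares less_imp_le)
  also have "\<dots> \<le> (\<Sum>i\<in>?R. \<bar>(v i)\<^sup>2 - (u i)\<^sup>2\<bar>)" by (rule sum_abs)
  also have "\<dots> \<le> (\<Sum>i\<in>?R. \<bar>u i - v i\<bar> * (u j + v j))"
  proof (rule sum_mono)
    fix i assume i: "i \<in> ?R"
    then have "\<bar>(v i)\<^sup>2 - (u i)\<^sup>2\<bar> = \<bar>u i - v i\<bar> * (u i + v i)"
      using assms by (simp add: abs_diff_squares abs_minus_commute add.commute)
    also have "\<dots> \<le> \<bar>u i - v i\<bar> * (u j + v j)" using max i by (intro mult_left_mono) auto
    finally show "\<bar>(v i)\<^sup>2 - (u i)\<^sup>2\<bar> \<le> \<bar>u i - v i\<bar> * (u j + v j)" .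
  qed
  finally show ?thesis using uj vj by (simp add: sum_distrib_right[symmetric])
qed

lemma sum_sq_diff_le_of_common_argmax:
  fixes u v :: "'a \<Rightarrow> real"
  assumes "finite X" "j \<in> X" "\<forall>x\<in>X. 0 \<le> u x \<and> 0 \<le> v x"
    and "(\<Sum>x\<in>X. (u x)\<^sup>2) = 1" "(\<Sum>x\<in>X. (v x)\<^sup>2) = 1"
    and "\<forall>i\<in>X. u i \<le> u j \<and> v i \<le> v j"
    and close: "\<forall>i\<in>X - {j}. \<bar>u i - v i\<bar> \<le> \<delta>"
  shows "(\<Sum>x\<in>X. (u x - v x)\<^sup>2) \<le> real (card X) * (real (card X) - 1) * \<delta>\<^sup>2"
proof -
  let ?R = "X - {j}"
  have "1 \<le> card X" using assms(1,2) by (auto simp: Suc_le_eq card_gt_0_iff)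
  then have cR: "real (card ?R) = real (card X) - 1"
    using assms(1,2) by (simp add: card_Diff_singleton)
  have "(\<Sum>i\<in>?R. \<bar>u i - v i\<bar>) \<le> (\<Sum>i\<in>?R. \<delta>)" using close by (intro sum_mono) auto
  then have "\<bar>u j - v j\<bar> \<le> (\<Sum>i\<in>?R. \<delta>)"
    using abs_diff_at_common_argmax_le[OF assms(1-6)] by linarith
  then have "(u j - v j)\<^sup>2 \<le> (real (card ?R) * \<delta>)\<^sup>2"
    by (metis abs_ge_zero power2_abs power_mono sum_constant)
  moreover have "(u i - v i)\<^sup>2 \<le> \<delta>\<^sup>2" if "i \<in> ?R" for i
    using close that by (metis abs_ge_zero power2_abs power_mono)
  then have "(\<Sum>i\<in>?R. (u i - v i)\<^sup>2) \<le> real (card ?R) * \<delta>\<^sup>2"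
    using sum_mono[of ?R "\<lambda>i. (u i - v i)\<^sup>2" "\<lambda>_. \<delta>\<^sup>2"] by simp
  moreover have "(\<Sum>x\<in>X. (u x - v x)\<^sup>2) = (u j - v j)\<^sup>2 + (\<Sum>i\<in>?R. (u i - v i)\<^sup>2)"
    using assms(1,2) by (simp add: sum.remove)
  ultimately show ?thesis unfolding cR by (simp add: power2_eq_square algebra_simps)
qed

lemma arg_max_on_finite:
  fixes v :: "'a \<Rightarrow> 'b :: linorder"
  assumes "finite X" "X \<noteq> {}"
  shows "arg_max_on v X \<in> X" "\<forall>i\<in>X. v i \<le> v (arg_max_on v X)"
proof -
  obtain j where "j \<in> X" "\<forall>i\<in>X. v i \<le> v j"
    using Max_in[of "v ` X"] Max_ge[of "v ` X"] assms by fastforce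
  then have "arg_max_on v X \<in> X \<and> (\<forall>i\<in>X. v i \<le> v (arg_max_on v X))"
    unfolding arg_max_on_def
    by (intro arg_maxI[where P = "\<lambda>i. i \<in> X" and f = v and x = j
          and Q = "\<lambda>k. k \<in> X \<and> (\<forall>i\<in>X. v i \<le> v k)"]) (auto simp: not_less)
  then show "arg_max_on v X \<in> X" "\<forall>i\<in>X. v i \<le> v (arg_max_on v X)" by auto
qed

lemma card_grid_keys:
  assumes "finite X"
  shows "card (SIGMA j:X. \<Pi>\<^sub>E i\<in>X. if i = j then {0} else {..<N}) = card X * N ^ (card X - 1)"
proof -
  have "card (\<Pi>\<^sub>E i\<in>X. if i = j then {0} else {..<N}) = N ^ (card X - 1)" if "j \<in> X" for j
  proof -
    have "card (\<Pi>\<^sub>E i\<in>X. if i = j then {0} else {..<N})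
        = card (if j = j then {0::nat} else {..<N}) * (\<Prod>i\<in>X - {j}. card (if i = j then {0} else {..<N}))"
      using assms that by (simp add: card_PiE prod.remove del: if_True)
    also have "\<dots> = N ^ (card X - 1)"
      using assms that by (simp add: card_Diff_singleton)
    finally show ?thesis .
  qed
  then show ?thesis using assms by (simp add: finite_PiE)
qed

lemma nonneg_unit_vectors_close_pair:
  fixes u :: "'b \<Rightarrow> 'a \<Rightarrow> real"
  assumes "finite X" "1 \<le> N" and many: "card X * N ^ (card X - 1) < card L"
    and nonneg: "\<forall>y\<in>L. \<forall>x\<in>X. 0 \<le> u y x" and unit: "\<forall>y\<in>L. (\<Sum>x\<in>X. (u y x)\<^sup>2) = 1"
  obtains \<alpha> \<beta> where "\<alpha> \<in> L" "\<beta> \<in> L" "\<alpha> \<noteq> \<beta>"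
    "(\<Sum>x\<in>X. (u \<alpha> x - u \<beta> x)\<^sup>2) \<le> real (card X) * (real (card X) - 1) * (1 / real N)\<^sup>2"
proof -
  have "L \<noteq> {}" using many by auto
  then have "X \<noteq> {}" using unit by force
  note argmax = arg_max_on_finite[OF assms(1) this]
  define key where "key y = (arg_max_on (u y) X,
      restrict (\<lambda>i. if i = arg_max_on (u y) X then 0 else grid_cell N (u y i)) X)" for y
  let ?K = "SIGMA j:X. \<Pi>\<^sub>E i\<in>X. if i = j then {0} else {..<N}"
  have "key ` L \<subseteq> ?K"
    using argmax(1) grid_cell_less assms(2) by (auto simp: key_def)
  then have "card (key ` L) \<le> card ?K"
    using assms(1) by (intro card_mono) (auto simp: finite_PiE)
  then have "\<not> inj_on key L"
    using many card_grid_keys[OF assms(1)] pigeonhole by (metis le_less_trans)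
  then obtain \<alpha> \<beta> where ab: "\<alpha> \<in> L" "\<beta> \<in> L" "\<alpha> \<noteq> \<beta>" and key: "key \<alpha> = key \<beta>"
    unfolding inj_on_def by blast
  define j where "j = arg_max_on (u \<alpha>) X"
  have j: "arg_max_on (u \<beta>) X = j" using key unfolding key_def j_def by simp
  have le1: "u y x \<le> 1" if "y \<in> L" "x \<in> X" for y x
  proof -
    have "(u y x)\<^sup>2 \<le> (\<Sum>x\<in>X. (u y x)\<^sup>2)" using that assms(1) by (intro member_le_sum) auto
    then show ?thesis using unit that by (metis abs_le_D1 abs_square_le_1)
  qed
  have "\<bar>u \<alpha> i - u \<beta> i\<bar> \<le> 1 / real N" if i: "i \<in> X - {j}" for i
  proof (rule abs_diff_le_of_grid_cell_eq)
    show "grid_cell N (u \<alpha> i) = grid_cell N (u \<beta> i)"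
      using fun_cong[OF arg_cong[OF key, of snd], of i] i j unfolding key_def j_def by simp
  qed (use i ab nonneg le1 assms(2) in auto)
  then have "(\<Sum>x\<in>X. (u \<alpha> x - u \<beta> x)\<^sup>2) \<le> real (card X) * (real (card X) - 1) * (1 / real N)\<^sup>2"
    using ab nonneg unit argmax(1) argmax(2)[of "u \<alpha>"] argmax(2)[of "u \<beta>"] j unfolding j_def
    by (intro sum_sq_diff_le_of_common_argmax[OF assms(1)]) auto
  with ab show ?thesis by (rule that)
qed

section \<open>Numerical estimates\<close>

lemma Gamma_three_halves: "Gamma (3 / 2 :: real) = sqrt pi / 2"
proof -
  have "Gamma (1/2 + 1 :: real) = 1/2 * Gamma (1/2)"
    by (subst Gamma_plus1) auto
  then show ?thesis by (simp add: Gamma_one_half_real)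
qed

lemma Gamma_one_plus_half_le: "Gamma (1 + real k / 2) \<le> ((real k + 2) / 2) powr (real k / 2)"
proof (induction k rule: nat_induct2)
  case 1
  have "sqrt pi \<le> 2" using real_sqrt_le_mono[of pi 4] pi_less_4 by simp
  moreover have "1 \<le> sqrt (3 / 2 :: real)" by simp
  ultimately have "sqrt pi / 2 \<le> sqrt (3 / 2)" by linarith
  then show ?case using Gamma_three_halves by (simp add: powr_half_sqrt)
next
  case (step j)
  have "1 + real j / 2 \<notin> \<int>\<^sub>\<le>\<^sub>0" using nonpos_Ints_nonpos[of "1 + real j / 2"] by force
  then have "Gamma (1 + real j / 2 + 1) = (1 + real j / 2) * Gamma (1 + real j / 2)"
    by (rule Gamma_plus1)
  then have "Gamma (1 + real (j + 2) / 2) = (1 + real j / 2) * Gamma (1 + real j / 2)"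
    by (simp add: add_divide_distrib)
  also have "\<dots> \<le> (1 + real j / 2) * ((real j + 2) / 2) powr (real j / 2)"
    using step by (intro mult_left_mono) auto
  also have "\<dots> = ((real j + 2) / 2) powr (real j / 2 + 1)"
    by (simp add: powr_add add_divide_distrib)
  also have "\<dots> \<le> ((real (j + 2) + 2) / 2) powr (real j / 2 + 1)"
    by (intro powr_mono2) auto
  also have "real j / 2 + 1 = real (j + 2) / 2" by simp
  finally show ?case .
qed simp

lemma Gamma_powr_le:
  assumes "2 \<le> n"
  shows "Gamma (1 + (real n - 1) / 2) powr (2 / (real n - 1)) \<le> (real n + 1) / 2"
proof -
  have n: "2 \<le> real n" using assms by simp
  have "0 < 1 + (real n - 1) / 2" using n by (simp add: field_simps)
  then have G: "0 < Gamma (1 + (real n - 1) / 2)" by (rule Gamma_real_pos)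
  have "Gamma (1 + (real n - 1) / 2) \<le> ((real n + 1) / 2) powr ((real n - 1) / 2)"
    using Gamma_one_plus_half_le[of "n - 1"] assms by (simp add: add.commute)
  then have "Gamma (1 + (real n - 1) / 2) powr (2 / (real n - 1))
      \<le> ((real n + 1) / 2) powr ((real n - 1) / 2 * (2 / (real n - 1)))"
    using G n by (subst powr_powr[symmetric]) (intro powr_mono2, auto)
  moreover have "(real n - 1) / 2 * (2 / (real n - 1)) = 1" using n by simp
  ultimately have "Gamma (1 + (real n - 1) / 2) powr (2 / (real n - 1)) \<le> ((real n + 1) / 2) powr 1"
    by (simp only:)
  then show ?thesis using n by simp
qed

lemma sqrt_one_plus_le:
  fixes t :: real
  assumes "0 \<le> t"
  shows "sqrt (1 + t) \<le> 1 + t / 2"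
proof (rule real_le_lsqrt)
  show "1 + t \<le> (1 + t / 2)\<^sup>2" by (simp add: power2_eq_square algebra_simps)
qed (use assms in auto)

lemma mu_const_eq:
  assumes "2 \<le> n"
  shows "mu_const n = pi * real n / ((sqrt (1 + 1 / (2 * (real n - 1))) - 1)\<^sup>2
      * Gamma (1 + (real n - 1) / 2) powr (2 / (real n - 1))) * (2 * real n) powr (2 / (real n - 1))"
proof -
  define e where "e = 2 / (real n - 1)"
  define S where "S = sqrt (1 + 1 / (2 * (real n - 1))) - 1"
  define G where "G = Gamma (1 + (real n - 1) / 2)"
  have "0 < 1 + (real n - 1) / 2" using assms by (simp add: field_simps)
  then have G: "0 < G" unfolding G_def by (rule Gamma_real_pos)
  have "mu_const n = 2 / (real n - 1) * (pi * real n * (real n - 1) / (2 * S\<^sup>2) * (2 * real n / G) powr e)"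
    unfolding mu_const_def nu_const_def S_def G_def e_def ..
  also have "(2 * real n / G) powr e = (2 * real n) powr e / G powr e"
    using G by (simp add: powr_divide)
  also have "2 / (real n - 1) * (pi * real n * (real n - 1) / (2 * S\<^sup>2) * ((2 * real n) powr e / G powr e))
      = pi * real n / (S\<^sup>2 * G powr e) * (2 * real n) powr e"
  proof -
    have "2 / x * (pi * real n * x / (2 * S\<^sup>2) * (T / Gp)) = pi * real n / (S\<^sup>2 * Gp) * T"
      if "x \<noteq> 0" for x T Gp :: real
      using that by (simp add: field_simps)
    then show ?thesis using assms by simp
  qed
  finally show ?thesis unfolding S_def G_def e_def .
qed

lemma mu_const_lower_bound:
  assumes "2 \<le> n"
  shows "32 * real n * (real n - 1) * (2 * real n) powr (2 / (real n - 1)) \<le> mu_const n"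
proof -
  define e where "e = 2 / (real n - 1)"
  define S where "S = sqrt (1 + 1 / (2 * (real n - 1))) - 1"
  define G where "G = Gamma (1 + (real n - 1) / 2)"
  have n: "2 \<le> real n" using assms by simp
  have "0 < 1 + (real n - 1) / 2" using n by (simp add: field_simps)
  then have G: "0 < G" unfolding G_def by (rule Gamma_real_pos)
  have S: "0 < S" unfolding S_def using n by simp
  have "S \<le> 1 / (2 * (real n - 1)) / 2"
    using sqrt_one_plus_le[of "1 / (2 * (real n - 1))"] n unfolding S_def by simp
  then have "S\<^sup>2 \<le> (1 / (4 * (real n - 1)))\<^sup>2" using S by (intro power_mono) auto
  moreover have "G powr e \<le> (real n + 1) / 2"
    unfolding G_def e_def by (rule Gamma_powr_le[OF assms])
  ultimately have "S\<^sup>2 * G powr e \<le> (1 / (4 * (real n - 1)))\<^sup>2 * ((real n + 1) / 2)"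
    using G by (intro mult_mono) auto
  also have "\<dots> = (real n + 1) / (real n - 1) * (1 / (32 * (real n - 1)))"
    using n by (simp add: power2_eq_square field_simps)
  also have "\<dots> \<le> pi * (1 / (32 * (real n - 1)))"
  proof (rule mult_right_mono)
    have "real n + 1 \<le> 3 * (real n - 1)" using n by simp
    also have "\<dots> \<le> pi * (real n - 1)" using n pi_gt3 by (intro mult_right_mono) auto
    finally show "(real n + 1) / (real n - 1) \<le> pi" using n by (simp add: divide_le_eq)
  qed (use n in simp)
  finally have "32 * real n * (real n - 1) * (S\<^sup>2 * G powr e) \<le> 32 * real n * (real n - 1) * (pi * (1 / (32 * (real n - 1))))"
    using n by (intro mult_left_mono) auto
  also have "\<dots> = pi * real n" using n by (simp add: field_simps)
  finally have "32 * real n * (real n - 1) \<le> pi * real n / (S\<^sup>2 * G powr e)"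
    using G S by (simp add: pos_le_divide_eq)
  then have "32 * real n * (real n - 1) * (2 * real n) powr e
      \<le> pi * real n / (S\<^sup>2 * G powr e) * (2 * real n) powr e"
    by (rule mult_right_mono) simp
  also have "\<dots> = mu_const n"
    unfolding mu_const_eq[OF assms] S_def G_def e_def ..
  finally show ?thesis unfolding e_def .
qed

lemma grid_bound_le_mu_const:
  fixes n m N :: nat
  assumes "2 \<le> n" "0 < m" "1 \<le> N" and m: "real m < 2 * real n * (real N + 1) ^ (n - 1)"
  shows "8 * real n * (real n - 1) / (real m * (real N)\<^sup>2)
    \<le> mu_const n * real m powr (- ((real n + 1) / (real n - 1)))"
proof -
  define e where "e = 2 / (real n - 1)"
  have n: "2 \<le> real n" using assms by simp
  have "(real m / (2 * real n)) powr e \<le> ((real N + 1) ^ (n - 1)) powr e"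
    using m n unfolding e_def by (intro powr_mono2) (auto simp: field_simps)
  also have "\<dots> = ((real N + 1) powr (real n - 1)) powr e"
    using assms(1) by (simp add: powr_realpow[symmetric])
  also have "\<dots> = (real N + 1) powr ((real n - 1) * e)"
    by (simp add: powr_powr)
  also have "(real n - 1) * e = 2" using n unfolding e_def by (simp add: field_simps)
  also have "(real N + 1) powr 2 = (real N + 1)\<^sup>2" by simp
  also have "\<dots> \<le> (2 * real N)\<^sup>2"
    using assms(3) by (intro power_mono) auto
  finally have "real m powr e \<le> 4 * (real N)\<^sup>2 * (2 * real n) powr e"
    using n by (simp add: powr_divide divide_le_eq power_mult_distrib)
  then have "1 / (real N)\<^sup>2 \<le> 4 * (2 * real n) powr e / real m powr e"
    using assms by (simp add: field_simps)
  then have "8 * real n * (real n - 1) / real m * (1 / (real N)\<^sup>2)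
      \<le> 8 * real n * (real n - 1) / real m * (4 * (2 * real n) powr e / real m powr e)"
    using n by (intro mult_left_mono) auto
  then have "8 * real n * (real n - 1) / (real m * (real N)\<^sup>2)
      \<le> 32 * real n * (real n - 1) * (2 * real n) powr e / (real m * real m powr e)"
    by simp
  also have "\<dots> \<le> mu_const n / (real m * real m powr e)"
    using mu_const_lower_bound[OF assms(1)] assms unfolding e_def by (simp add: divide_right_mono)
  also have "\<dots> = mu_const n * real m powr (- ((real n + 1) / (real n - 1)))"
  proof -
    have "- ((real n + 1) / (real n - 1)) = - (1 + e)" using n unfolding e_def by (simp add: field_simps)
    then have "real m powr (- ((real n + 1) / (real n - 1))) = inverse (real m powr (1 + e))"
      by (simp only: powr_minus)
    also have "\<dots> = 1 / (real m * real m powr e)" using assms(2) by (simp add: powr_add divide_inverse)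
    finally show ?thesis by simp
  qed
  finally show ?thesis .
qed

section \<open>Choosing the letters\<close>

lemma card_lt_twice_card_light:
  fixes q :: "'b \<Rightarrow> real"
  assumes "finite Y" "Y \<noteq> {}" "\<forall>y\<in>Y. 0 \<le> q y" "(\<Sum>y\<in>Y. q y) = 1"
  shows "card Y < 2 * card {y\<in>Y. q y \<le> 2 / real (card Y)}"
proof -
  let ?L = "{y\<in>Y. q y \<le> 2 / real (card Y)}"
  let ?H = "Y - ?L"
  have m: "0 < card Y" using assms by (simp add: card_gt_0_iff)
  have "2 * card ?H < card Y"
  proof (cases "?H = {}")
    case False
    have "(\<Sum>y\<in>?H. 2 / real (card Y)) < (\<Sum>y\<in>?H. q y)"
      using False assms(1) by (intro sum_strict_mono) auto
    also have "\<dots> \<le> (\<Sum>y\<in>Y. q y)" using assms by (intro sum_mono2) auto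
    finally show ?thesis using m assms(4) by (simp add: field_simps)
  next
    case True
    then show ?thesis using m by (simp only: card.empty)
  qed
  moreover have "card ?L \<le> card Y" using assms(1) by (intro card_mono) auto
  moreover have "card ?H = card Y - card ?L" using assms(1) by (intro card_Diff_subset) auto
  ultimately show ?thesis by linarith
qed

lemma exists_grid_resolution:
  fixes n k :: nat
  assumes "2 \<le> n" "n < k"
  obtains N where "1 \<le> N" "n * N ^ (n - 1) < k" "k \<le> n * (N + 1) ^ (n - 1)"
proof -
  define N where "N = (LEAST N. k \<le> n * (N + 1) ^ (n - 1))"
  have "k + 1 \<le> (k + 1) ^ (n - 1)" using assms(1) by (intro self_le_power) auto
  moreover have "(k + 1) ^ (n - 1) \<le> n * (k + 1) ^ (n - 1)" using assms(1) by simp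
  ultimately have "k \<le> n * (k + 1) ^ (n - 1)" by linarith
  then have up: "k \<le> n * (N + 1) ^ (n - 1)" unfolding N_def by (rule LeastI)
  then have "N \<noteq> 0" using assms by (cases N) auto
  moreover have "\<not> k \<le> n * (N - 1 + 1) ^ (n - 1)"
    using \<open>N \<noteq> 0\<close> unfolding N_def by (intro not_less_Least) simp
  ultimately show ?thesis using up by (intro that) auto
qed

lemma exists_close_light_pair:
  assumes "finite X" "finite Y" "2 \<le> card X" "2 * card X < card Y" "is_channel X Y W"
    and "\<forall>x\<in>X. 0 < p x" "(\<Sum>x\<in>X. p x) = 1" "\<forall>y\<in>Y. 0 < out_prob X p W y"
  obtains \<alpha> \<beta> N where "\<alpha> \<in> Y" "\<beta> \<in> Y" "\<alpha> \<noteq> \<beta>" "1 \<le> N"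
    "real (card Y) < 2 * real (card X) * (real N + 1) ^ (card X - 1)"
    "out_prob X p W \<alpha> + out_prob X p W \<beta> \<le> 4 / real (card Y)"
    "(\<Sum>x\<in>X. (sqrt_posterior X p W \<alpha> x - sqrt_posterior X p W \<beta> x)\<^sup>2)
      \<le> real (card X) * (real (card X) - 1) * (1 / real N)\<^sup>2"
proof -
  let ?n = "card X" and ?m = "card Y"
  let ?o = "out_prob X p W" and ?u = "sqrt_posterior X p W"
  define L where "L = {y\<in>Y. ?o y \<le> 2 / real ?m}"
  have "Y \<noteq> {}" using assms(4) by auto
  then have "?m < 2 * card L"
    unfolding L_def using assms(2,8) sum_out_prob[OF assms(5,7)]
    by (intro card_lt_twice_card_light) auto
  then have "?n < card L" using assms(4) by linarith
  with assms(3) obtain N where N: "1 \<le> N" "?n * N ^ (?n - 1) < card L" "card L \<le> ?n * (N + 1) ^ (?n - 1)"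
    by (rule exists_grid_resolution)
  have "\<forall>y\<in>L. \<forall>x\<in>X. 0 \<le> ?u y x" "\<forall>y\<in>L. (\<Sum>x\<in>X. (?u y x)\<^sup>2) = 1"
    using sqrt_posterior_sq(2)[OF assms(5,6)] sum_sqrt_posterior_sq[OF assms(5,6)] assms(8)
    unfolding L_def by auto
  with N(2) obtain \<alpha> \<beta> where ab: "\<alpha> \<in> L" "\<beta> \<in> L" "\<alpha> \<noteq> \<beta>"
    and "(\<Sum>x\<in>X. (?u \<alpha> x - ?u \<beta> x)\<^sup>2) \<le> real ?n * (real ?n - 1) * (1 / real N)\<^sup>2"
    by (rule nonneg_unit_vectors_close_pair[OF assms(1) N(1)])
  moreover have "real ?m < 2 * real ?n * (real N + 1) ^ (?n - 1)"
  proof -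
    have "real ?m < 2 * real (card L)" using \<open>?m < 2 * card L\<close> by linarith
    also have "\<dots> \<le> 2 * real (?n * (N + 1) ^ (?n - 1))" using N(3) by linarith
    finally show ?thesis by (simp add: add.commute mult.assoc)
  qed
  moreover have "\<alpha> \<in> Y" "\<beta> \<in> Y" "?o \<alpha> + ?o \<beta> \<le> 4 / real ?m" using ab unfolding L_def by auto
  ultimately show ?thesis using that N(1) by blast
qed

theorem theorem2:
  fixes X :: "'a set" and Y :: "'b set"
    and W :: "'a \<Rightarrow> 'b \<Rightarrow> real" and p :: "'a \<Rightarrow> real"
  assumes "finite X" and "finite Y"
    and "card X \<ge> 2"
    and "card Y > 2 * card X"
    and "is_channel X Y W"
    and "\<forall>x\<in>X. p x > 0" and "(\<Sum>x\<in>X. p x) = 1"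
    and "\<forall>y\<in>Y. out_prob X p W y > 0"
  shows "\<exists>\<alpha>\<in>Y. \<exists>\<beta>\<in>Y. \<alpha> \<noteq> \<beta> \<and>
     mutual_info X Y p W
       - mutual_info X (merged_alphabet Y \<alpha> \<beta>) p (merge_channel W \<alpha> \<beta>)
     \<le> mu_const (card X) * real (card Y) powr (- ((real (card X) + 1) / (real (card X) - 1)))"
proof -
  obtain \<alpha> \<beta> N where Y: "\<alpha> \<in> Y" "\<beta> \<in> Y" "\<alpha> \<noteq> \<beta>" and N: "1 \<le> N"
    and m: "real (card Y) < 2 * real (card X) * (real N + 1) ^ (card X - 1)"
    and light: "out_prob X p W \<alpha> + out_prob X p W \<beta> \<le> 4 / real (card Y)"
    and close: "(\<Sum>x\<in>X. (sqrt_posterior X p W \<alpha> x - sqrt_posterior X p W \<beta> x)\<^sup>2)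
      \<le> real (card X) * (real (card X) - 1) * (1 / real N)\<^sup>2"
    using exists_close_light_pair[OF assms] by blast
  have "0 < out_prob X p W \<alpha>" "0 < out_prob X p W \<beta>" using Y assms(8) by auto
  have "mutual_info X Y p W - mutual_info X (merged_alphabet Y \<alpha> \<beta>) p (merge_channel W \<alpha> \<beta>)
      \<le> 2 * (out_prob X p W \<alpha> + out_prob X p W \<beta>) *
         (\<Sum>x\<in>X. (sqrt_posterior X p W \<alpha> x - sqrt_posterior X p W \<beta> x)\<^sup>2)"
    by (rule mutual_info_merge_loss_le[OF assms(2,5,6,8) Y])
  also have "\<dots> \<le> 2 * (4 / real (card Y)) * (real (card X) * (real (card X) - 1) * (1 / real N)\<^sup>2)"
    using light close \<open>0 < out_prob X p W \<alpha>\<close> \<open>0 < out_prob X p W \<beta>\<close>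
    by (intro mult_mono) (auto intro!: sum_nonneg)
  also have "\<dots> = 8 * real (card X) * (real (card X) - 1) / (real (card Y) * (real N)\<^sup>2)"
    by (simp add: field_simps)
  also have "\<dots> \<le> mu_const (card X) * real (card Y) powr (- ((real (card X) + 1) / (real (card X) - 1)))"
    using grid_bound_le_mu_const[OF assms(3) _ N m] assms(4) by simp
  finally show ?thesis using Y by blast
qed

end
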